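(* Let $\mathcal A=(\mathbf a,\mathbf b)$ be a binary GCP of length $M$ and let $\mathcal B=(\mathbf c,\mathbf d)$ be a binary $(N,Z)$-CZCP. Let $(\mathbf e,\mathbf f)=\mathrm{Turyn}(\mathcal A,\mathcal B)$, i.e. $$\mathbf e=\mathbf c\otimes\frac{\mathbf a+\mathbf b}2-\overleftarrow{\mathbf d}\otimes\frac{\mathbf b-\mathbf a}2,\qquad \mathbf f=\mathbf d\otimes\frac{\mathbf a+\mathbf b}2+\overleftarrow{\mathbf c}\otimes\frac{\mathbf b-\mathbf a}2 .$$ Then $(\mathbf e,\mathbf f)$ is an $(NM,ZM)$-CZCP.
   Context: A binary GCP of length $M$ is a pair of $\pm1$ sequences with $\rho_{\mathbf a}(\tau)+\rho_{\mathbf b}(\tau)=0$ for all $\tau\ne0$. $\overleftarrow{\mathbf u}$ denotes the reversal of $\mathbf u$ and $\mathbf u\otimes\mathbf v=(u_0\mathbf v,u_1\mathbf v,\dots,u_{N-1}\mathbf v)$ the Kronecker product (so $\mathbf e,\mathbf f$ have length $NM$). Aperiodic correlation of real sequences of length $L$: $\rho_{\mathbf a,\mathbf b}(\tau)=\sum_{k=0}^{L-1-\tau}a_kb_{k+\tau}$ for $0\le\tau\le L-1$, $\rho_{\mathbf a,\mathbf b}(\tau)=\sum_{k=0}^{L-1+\tau}a_{k-\tau}b_k$ for $-(L-1)\le\tau\le-1$, $0$ otherwise; $\rho_{\mathbf a}=\rho_{\mathbf a,\mathbf a}$. CZCP: with $\mathcal T_1=\{1,\dots,Z\}$, $\mathcal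 T_2=\{L-Z,\dots,L-1\}$, a pair $(\mathbf a,\mathbf b)$ of length-$L$ sequences is an $(L,Z)$-CZCP if $\rho_{\mathbf a}(\tau)+\rho_{\mathbf b}(\tau)=0$ for all $|\tau|\in\mathcal T_1\cup\mathcal T_2$ and $\rho_{\mathbf a,\mathbf b}(\tau)+\rho_{\mathbf b,\mathbf a}(\tau)=0$ for all $|\tau|\in\mathcal T_2$. *)

theory Defs
  imports Complex_Main
begin

definition binary :: "real list \<Rightarrow> bool" where
  "binary u \<longleftrightarrow> (\<forall>x\<in>set u. x = 1 \<or> x = -1)"

definition acorr :: "real list \<Rightarrow> real list \<Rightarrow> int \<Rightarrow> real" where
  "acorr a b \<tau> =
    (let L = int (length a) in
     if 0 \<le> \<tau> \<and> \<tau> \<le> L - 1 then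
       (\<Sum>k=0..L-1-\<tau>. a ! nat k * b ! nat (k + \<tau>))
     else if -(L - 1) \<le> \<tau> \<and> \<tau> \<le> -1 then
       (\<Sum>k=0..L-1+\<tau>. a ! nat (k - \<tau>) * b ! nat k)
     else 0)"

abbreviation aacorr :: "real list \<Rightarrow> int \<Rightarrow> real" where
  "aacorr a \<equiv> acorr a a"

definition GCP :: "real list \<Rightarrow> real list \<Rightarrow> bool" where
  "GCP a b \<longleftrightarrow> length a = length b \<and>
     (\<forall>\<tau>::int. \<tau> \<noteq> 0 \<longrightarrow> aacorr a \<tau> + aacorr b \<tau> = 0)"

definition binary_GCP :: "real list \<Rightarrow> real list \<Rightarrow> nat \<Rightarrow> bool" where
  "binary_GCP a b M \<longleftrightarrow> binary a \<and> binary b \<and> length a = M \<and> length b = M \<and> GCP a b"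

definition CZCP :: "real list \<Rightarrow> real list \<Rightarrow> nat \<Rightarrow> nat \<Rightarrow> bool" where
  "CZCP a b L Z \<longleftrightarrow> length a = L \<and> length b = L \<and>
     (let T1 = {1..int Z}; T2 = {int L - int Z..int L - 1} in
       (\<forall>\<tau>::int. \<bar>\<tau>\<bar> \<in> T1 \<union> T2 \<longrightarrow> aacorr a \<tau> + aacorr b \<tau> = 0) \<and>
       (\<forall>\<tau>::int. \<bar>\<tau>\<bar> \<in> T2 \<longrightarrow> acorr a b \<tau> + acorr b a \<tau> = 0))"

definition binary_CZCP :: "real list \<Rightarrow> real list \<Rightarrow> nat \<Rightarrow> nat \<Rightarrow> bool" where
  "binary_CZCP a b L Z \<longleftrightarrow> binary a \<and> binary b \<and> CZCP a b L Z"

definition kron :: "real list \<Rightarrow> real list \<Rightarrow> real list" where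
  "kron u v = concat (map (\<lambda>x. map (\<lambda>y. x * y) v) u)"

definition vadd :: "real list \<Rightarrow> real list \<Rightarrow> real list" where
  "vadd u v = map2 (+) u v"

definition vsub :: "real list \<Rightarrow> real list \<Rightarrow> real list" where
  "vsub u v = map2 (-) u v"

definition vscale :: "real \<Rightarrow> real list \<Rightarrow> real list" where
  "vscale c u = map (\<lambda>x. c * x) u"

definition turyn_e :: "real list \<Rightarrow> real list \<Rightarrow> real list \<Rightarrow> real list \<Rightarrow> real list" where
  "turyn_e a b c d =
     vsub (kron c (vscale (1/2) (vadd a b))) (kron (rev d) (vscale (1/2) (vsub b a)))"

definition turyn_f :: "real list \<Rightarrow> real list \<Rightarrow> real list \<Rightarrow> real list \<Rightarrow> real list" where
  "turyn_f a b c d =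
     vadd (kron d (vscale (1/2) (vadd a b))) (kron (rev c) (vscale (1/2) (vsub b a)))"

end

theory Submission
  imports Defs
begin

(*
  With s = (a + b)/2 and t = (b - a)/2, the sequences e and f are concatenations of the
  length-M blocks U_i = c_i s - d_(N-1-i) t and V_i = d_i s + c_(N-1-i) t, so every correlation
  of e, f at lag tau is a double sum of block correlations at the lags tau + (i - j) M.
  The flip (i, j) -> (N-1-j, N-1-i) preserves i - j; averaging over it cancels the reversed
  terms, and rho_e + rho_f becomes  sum_p (rho_c + rho_d)(p) (rho_s + rho_t)(tau - p M),  where
  rho_s + rho_t = (rho_a + rho_b)/2 vanishes off lag 0. The cross-correlation sum becomes the
  analogous sum over the cross-correlations of c, d, which only sees lags |p| >= N - Z when
  |tau| >= (N - Z) M, plus terms with coefficients c_i c_k - d_i d_k where i, k are both among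
  the first or both among the last Z positions. These vanish because the CZCP conditions at
  the lags N-1-m, m < Z, force c_m d_m to be constant on the first Z positions and equal to
  its negative on the last Z positions.
*)

section \<open>Zero-padded sequences and aperiodic correlation\<close>

definition padded :: "real list \<Rightarrow> int \<Rightarrow> real" where
  "padded u k = (if 0 \<le> k \<and> k < int (length u) then u ! nat k else 0)"

definition corr :: "nat \<Rightarrow> (int \<Rightarrow> real) \<Rightarrow> (int \<Rightarrow> real) \<Rightarrow> int \<Rightarrow> real" where
  "corr L x y \<tau> = (\<Sum>k\<in>{0..<int L}. x k * y (k + \<tau>))"

lemma padded_eq_0: "\<not> (0 \<le> k \<and> k < int (length u)) \<Longrightarrow> padded u k = 0"
  unfolding padded_def by auto

lemma acorr_eq_corr:
  assumes "length b = length a"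
  shows "acorr a b \<tau> = corr (length a) (padded a) (padded b) \<tau>"
proof -
  define L where "L = int (length a)"
  consider "0 \<le> \<tau> \<and> \<tau> \<le> L - 1" | "-(L - 1) \<le> \<tau> \<and> \<tau> \<le> -1" | "\<bar>\<tau>\<bar> \<ge> L"
    by linarith
  then show ?thesis
  proof cases
    case 1
    then have "acorr a b \<tau> = (\<Sum>k=0..L-1-\<tau>. a ! nat k * b ! nat (k + \<tau>))"
      unfolding acorr_def L_def Let_def by simp
    also have "\<dots> = (\<Sum>k\<in>{0..<L}. padded a k * padded b (k + \<tau>))"
      by (rule sum.mono_neutral_cong_left) (use 1 assms in \<open>auto simp: padded_def L_def\<close>)
    finally show ?thesis unfolding corr_def L_def .
  next
    case 2
    then have "acorr a b \<tau> = (\<Sum>k=0..L-1+\<tau>. a ! nat (k - \<tau>) * b ! nat k)"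
      unfolding acorr_def L_def Let_def by auto
    also have "\<dots> = (\<Sum>k\<in>{-\<tau>..<L}. padded a k * padded b (k + \<tau>))"
      by (rule sum.reindex_bij_witness[of _ "\<lambda>k. k + \<tau>" "\<lambda>k. k - \<tau>"])
        (use 2 assms in \<open>auto simp: padded_def L_def\<close>)
    also have "\<dots> = (\<Sum>k\<in>{0..<L}. padded a k * padded b (k + \<tau>))"
      by (rule sum.mono_neutral_cong_left) (use 2 assms in \<open>auto simp: padded_def L_def\<close>)
    finally show ?thesis unfolding corr_def L_def .
  next
    case 3
    then have "acorr a b \<tau> = 0"
      unfolding acorr_def L_def Let_def by auto
    also have "\<dots> = (\<Sum>k\<in>{0..<L}. padded a k * padded b (k + \<tau>))"
      by (rule sym, rule sum.neutral) (use 3 assms in \<open>auto simp: padded_def L_def\<close>)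
    finally show ?thesis unfolding corr_def L_def .
  qed
qed

lemma acorr_lag_from_end:
  assumes "length a = N" "m < N"
  shows "acorr a b (int (N - 1 - m)) = (\<Sum>k=0..m. a ! k * b ! (k + (N - 1 - m)))"
proof -
  have "acorr a b (int (N - 1 - m)) = (\<Sum>k\<in>{0..int m}. a ! nat k * b ! nat (k + int (N - 1 - m)))"
    using assms unfolding acorr_def Let_def by (auto simp: of_nat_diff)
  also have "\<dots> = (\<Sum>k=0..m. a ! k * b ! (k + (N - 1 - m)))"
    by (rule sum.reindex_bij_witness[of _ int nat]) (auto simp: nat_add_distrib)
  finally show ?thesis .
qed

lemma length_kron [simp]: "length (kron u v) = length u * length v"
  unfolding kron_def by (induction u) auto

lemma length_vadd [simp]: "length (vadd u v) = min (length u) (length v)"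
  unfolding vadd_def by simp

lemma length_vsub [simp]: "length (vsub u v) = min (length u) (length v)"
  unfolding vsub_def by simp

lemma length_vscale [simp]: "length (vscale r u) = length u"
  unfolding vscale_def by simp

lemma padded_vadd: "length u = length v \<Longrightarrow> padded (vadd u v) k = padded u k + padded v k"
  unfolding padded_def vadd_def by auto

lemma padded_vsub: "length u = length v \<Longrightarrow> padded (vsub u v) k = padded u k - padded v k"
  unfolding padded_def vsub_def by auto

lemma padded_vscale: "padded (vscale r u) k = r * padded u k"
  unfolding padded_def vscale_def by auto

lemma padded_rev: "padded (rev u) k = padded u (int (length u) - 1 - k)"
  unfolding padded_def by (auto simp: rev_nth nat_diff_distrib)

lemma padded_append: "padded (xs @ ys) k = padded xs k + padded ys (k - int (length xs))"
  unfolding padded_def by (auto simp: nth_append nat_diff_distrib)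

lemma padded_kron:
  "padded (kron u v) k = (\<Sum>i\<in>{0..<int (length u)}. padded u i * padded v (k - i * int (length v)))"
proof (induction u arbitrary: k)
  case Nil
  then show ?case by (simp add: kron_def padded_def)
next
  case (Cons x u)
  let ?n = "int (length v)"
  have "padded (kron (x # u) v) k = x * padded v k + padded (kron u v) (k - ?n)"
    by (simp add: kron_def padded_append) (auto simp: padded_def)
  also have "\<dots> = x * padded v k
      + (\<Sum>i\<in>{0..<int (length u)}. padded u i * padded v (k - (i + 1) * ?n))"
    by (simp add: Cons algebra_simps)
  also have "\<dots> = (\<Sum>i\<in>insert 0 {1..<int (length u) + 1}. padded (x # u) i * padded v (k - i * ?n))"
  proof -
    have "(\<Sum>i\<in>{1..<int (length u) + 1}. padded (x # u) i * padded v (k - i * ?n))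
        = (\<Sum>i\<in>{0..<int (length u)}. padded u i * padded v (k - (i + 1) * ?n))"
      by (rule sum.reindex_bij_witness[of _ "\<lambda>i. i + 1" "\<lambda>i. i - 1"])
        (auto simp: padded_def nat_add_distrib nat_diff_distrib)
    then show ?thesis by (simp add: padded_def)
  qed
  also have "insert 0 {1..<int (length u) + 1} = {0..<int (length (x # u))}"
    by auto
  finally show ?case .
qed

section \<open>Correlation of block sums\<close>

lemma corr_eq_0_far:
  assumes "\<And>j. \<not> (0 \<le> j \<and> j < int L) \<Longrightarrow> y j = 0" and "\<bar>\<tau>\<bar> \<ge> int L"
  shows "corr L x y \<tau> = 0"
  unfolding corr_def using assms by (auto intro!: sum.neutral assms(1))

lemma corr_lincomb:
  "corr L (\<lambda>r. p * s r + q * t r) (\<lambda>r. p' * s r + q' * t r) \<tau>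
   = p * p' * corr L s s \<tau> + p * q' * corr L s t \<tau> + q * p' * corr L t s \<tau> + q * q' * corr L t t \<tau>"
  unfolding corr_def by (simp add: sum.distrib sum_distrib_left algebra_simps)

lemma corr_block_sum:
  fixes U W :: "int \<Rightarrow> int \<Rightarrow> real"
  assumes U: "\<And>i x. x < 0 \<or> x \<ge> int M \<Longrightarrow> U i x = 0"
  shows "corr (N * M) (\<lambda>k. \<Sum>i\<in>{0..<int N}. U i (k - i * int M))
                      (\<lambda>k. \<Sum>j\<in>{0..<int N}. W j (k - j * int M)) \<tau>
       = (\<Sum>i\<in>{0..<int N}. \<Sum>j\<in>{0..<int N}. corr M (U i) (W j) (\<tau> + (i - j) * int M))"
proof -
  have block: "(\<Sum>k\<in>{0..<int (N * M)}. U i (k - i * int M) * W j (k + \<tau> - j * int M))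
      = corr M (U i) (W j) (\<tau> + (i - j) * int M)" if i: "i \<in> {0..<int N}" for i j
  proof -
    let ?g = "\<lambda>x. U i x * W j (x + \<tau> + (i - j) * int M)"
    have "(i + 1) * int M \<le> int N * int M"
      using i by (intro mult_right_mono) auto
    then have sub: "{i * int M..<i * int M + int M} \<subseteq> {0..<int (N * M)}"
      using i by (auto simp: algebra_simps)
    have "(\<Sum>k\<in>{0..<int (N * M)}. ?g (k - i * int M))
        = (\<Sum>k\<in>{i * int M..<i * int M + int M}. ?g (k - i * int M))"
      by (rule sum.mono_neutral_right) (use sub U in force)+
    also have "\<dots> = (\<Sum>x\<in>{0..<int M}. ?g x)"
      by (rule sum.reindex_bij_witness[of _ "\<lambda>x. x + i * int M" "\<lambda>k. k - i * int M"]) auto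
    finally show ?thesis
      unfolding corr_def by (simp add: algebra_simps)
  qed
  have "corr (N * M) (\<lambda>k. \<Sum>i\<in>{0..<int N}. U i (k - i * int M))
                     (\<lambda>k. \<Sum>j\<in>{0..<int N}. W j (k - j * int M)) \<tau>
      = (\<Sum>k\<in>{0..<int (N * M)}. \<Sum>i\<in>{0..<int N}. \<Sum>j\<in>{0..<int N}.
           U i (k - i * int M) * W j (k + \<tau> - j * int M))"
    unfolding corr_def by (simp add: sum_product)
  also have "\<dots> = (\<Sum>i\<in>{0..<int N}. \<Sum>j\<in>{0..<int N}. \<Sum>k\<in>{0..<int (N * M)}.
           U i (k - i * int M) * W j (k + \<tau> - j * int M))"
    by (simp only: sum.swap [where A = "{0..<int (N * M)}"])
  also have "\<dots> = (\<Sum>i\<in>{0..<int N}. \<Sum>j\<in>{0..<int N}. corr M (U i) (W j) (\<tau> + (i - j) * int M))"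
    by (intro sum.cong refl block)
  finally show ?thesis .
qed

lemma acorr_block_sum:
  fixes U W :: "int \<Rightarrow> int \<Rightarrow> real"
  assumes "length x = N * M" "length y = N * M"
    and "\<And>k. padded x k = (\<Sum>i\<in>{0..<int N}. U i (k - i * int M))"
    and "\<And>k. padded y k = (\<Sum>j\<in>{0..<int N}. W j (k - j * int M))"
    and "\<And>i r. r < 0 \<or> r \<ge> int M \<Longrightarrow> U i r = 0"
  shows "acorr x y \<tau> = (\<Sum>i\<in>{0..<int N}. \<Sum>j\<in>{0..<int N}. corr M (U i) (W j) (\<tau> + (i - j) * int M))"
proof -
  have "padded x = (\<lambda>k. \<Sum>i\<in>{0..<int N}. U i (k - i * int M))"
    and "padded y = (\<lambda>k. \<Sum>j\<in>{0..<int N}. W j (k - j * int M))"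
    using assms(3,4) by auto
  then show ?thesis
    using assms(1,2,5) by (simp add: acorr_eq_corr corr_block_sum)
qed

lemma double_sum_flip:
  "(\<Sum>i\<in>{0..<int N}. \<Sum>j\<in>{0..<int N}. F i j)
   = (\<Sum>i\<in>{0..<int N}. \<Sum>j\<in>{0..<int N}. F (int N - 1 - j) (int N - 1 - i))"
proof -
  have reflect: "(\<Sum>i\<in>{0..<int N}. g i) = (\<Sum>i\<in>{0..<int N}. g (int N - 1 - i))" for g :: "int \<Rightarrow> 'a"
    by (rule sum.reindex_bij_witness[of _ "\<lambda>i. int N - 1 - i" "\<lambda>i. int N - 1 - i"]) auto
  have "(\<Sum>i\<in>{0..<int N}. \<Sum>j\<in>{0..<int N}. F i j)
      = (\<Sum>i\<in>{0..<int N}. \<Sum>j\<in>{0..<int N}. F (int N - 1 - i) (int N - 1 - j))"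
    by (subst reflect, subst (2) reflect) (rule refl)
  also have "\<dots> = (\<Sum>i\<in>{0..<int N}. \<Sum>j\<in>{0..<int N}. F (int N - 1 - j) (int N - 1 - i))"
    by (rule sum.swap)
  finally show ?thesis .
qed

lemma double_sum_eq_by_flip:
  fixes S T :: "int \<Rightarrow> int \<Rightarrow> real"
  assumes "\<And>i j. i \<in> {0..<int N} \<Longrightarrow> j \<in> {0..<int N} \<Longrightarrow>
     S i j + S (int N - 1 - j) (int N - 1 - i) = T i j + T (int N - 1 - j) (int N - 1 - i)"
  shows "(\<Sum>i\<in>{0..<int N}. \<Sum>j\<in>{0..<int N}. S i j) = (\<Sum>i\<in>{0..<int N}. \<Sum>j\<in>{0..<int N}. T i j)"
proof -
  have double: "(\<Sum>i\<in>{0..<int N}. \<Sum>j\<in>{0..<int N}. F i j + F (int N - 1 - j) (int N - 1 - i))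
      = 2 * (\<Sum>i\<in>{0..<int N}. \<Sum>j\<in>{0..<int N}. F i j)" for F :: "int \<Rightarrow> int \<Rightarrow> real"
    using double_sum_flip [of F N] by (simp add: sum.distrib)
  have "(\<Sum>i\<in>{0..<int N}. \<Sum>j\<in>{0..<int N}. S i j + S (int N - 1 - j) (int N - 1 - i))
      = (\<Sum>i\<in>{0..<int N}. \<Sum>j\<in>{0..<int N}. T i j + T (int N - 1 - j) (int N - 1 - i))"
    using assms by (intro sum.cong refl) auto
  then show ?thesis
    by (simp only: double)
qed

lemma double_sum_by_lag:
  fixes X Y Q :: "int \<Rightarrow> real"
  assumes Y: "\<And>j. \<not> (0 \<le> j \<and> j < int N) \<Longrightarrow> Y j = 0"
  shows "(\<Sum>i\<in>{0..<int N}. \<Sum>j\<in>{0..<int N}. X i * Y j * Q (\<tau> + (i - j) * int M))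
       = (\<Sum>p\<in>{- int N<..<int N}. corr N X Y p * Q (\<tau> - p * int M))"
proof -
  have inner: "(\<Sum>j\<in>{0..<int N}. Y j * Q (\<tau> + (i - j) * int M))
      = (\<Sum>p\<in>{- int N<..<int N}. Y (i + p) * Q (\<tau> - p * int M))" if "i \<in> {0..<int N}" for i
  proof -
    have "(\<Sum>j\<in>{0..<int N}. Y j * Q (\<tau> + (i - j) * int M))
        = (\<Sum>j\<in>{i - int N<..<i + int N}. Y j * Q (\<tau> + (i - j) * int M))"
      by (rule sum.mono_neutral_left) (use that Y in auto)
    also have "\<dots> = (\<Sum>p\<in>{- int N<..<int N}. Y (i + p) * Q (\<tau> - p * int M))"
      by (rule sum.reindex_bij_witness[of _ "\<lambda>p. i + p" "\<lambda>j. j - i"]) (auto simp: algebra_simps)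
    finally show ?thesis .
  qed
  have "(\<Sum>i\<in>{0..<int N}. \<Sum>j\<in>{0..<int N}. X i * Y j * Q (\<tau> + (i - j) * int M))
      = (\<Sum>i\<in>{0..<int N}. \<Sum>p\<in>{- int N<..<int N}. X i * Y (i + p) * Q (\<tau> - p * int M))"
    by (rule sum.cong [OF refl]) (simp add: mult.assoc sum_distrib_left [symmetric] inner)
  also have "\<dots> = (\<Sum>p\<in>{- int N<..<int N}. corr N X Y p * Q (\<tau> - p * int M))"
    by (subst sum.swap) (simp add: corr_def sum_distrib_right add.commute)
  finally show ?thesis .
qed

lemma lag_near_multiple:
  fixes \<tau> p K :: int and M :: nat
  assumes M: "M > 0" and \<tau>: "K * int M \<le> \<bar>\<tau>\<bar>" and near: "\<bar>\<tau> - p * int M\<bar> < int M"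
  shows "0 \<le> \<tau> \<Longrightarrow> K \<le> p" and "\<tau> < 0 \<Longrightarrow> p \<le> - K"
proof -
  assume "0 \<le> \<tau>"
  then have "(K - 1) * int M < p * int M"
    using \<tau> near by (auto simp: algebra_simps)
  then show "K \<le> p"
    using M by (simp add: mult_less_cancel_right)
next
  assume "\<tau> < 0"
  then have "p * int M < (1 - K) * int M"
    using \<tau> near by (auto simp: algebra_simps)
  then show "p \<le> - K"
    using M by (simp add: mult_less_cancel_right)
qed

lemma lag_of_multiple:
  fixes p :: int and M N Z :: nat
  assumes "\<bar>p * int M\<bar> \<in> {1..int (Z * M)} \<union> {int (N * M) - int (Z * M)..int (N * M) - 1}"
  shows "\<bar>p\<bar> \<in> {1..int Z} \<union> {int N - int Z..int N - 1}"
proof -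
  have M: "M > 0" using assms by (cases M) auto
  have "\<bar>p\<bar> * int M \<in> {1..int Z * int M} \<union> {int N * int M - int Z * int M..int N * int M - 1}"
    using assms by (simp add: abs_mult)
  then consider "1 \<le> \<bar>p\<bar> * int M" "\<bar>p\<bar> * int M \<le> int Z * int M"
    | "(int N - int Z) * int M \<le> \<bar>p\<bar> * int M" "\<bar>p\<bar> * int M < int N * int M"
    by (auto simp: algebra_simps)
  then show ?thesis
  proof cases
    case 1
    moreover have "\<bar>p\<bar> \<noteq> 0" using 1 by auto
    ultimately show ?thesis using M by (auto simp: mult_le_cancel_right)
  next
    case 2
    then show ?thesis using M by (auto simp: mult_le_cancel_right mult_less_cancel_right)
  qed
qed

section \<open>Corner structure of binary CZCPs\<close>

(* Applied to u = c + d and v = c - d for binary c, d: exactly one of u k, v k vanishes,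
   and the two sums are the CZCP conditions at the lag N-1-m. *)
lemma corner_vanishing:
  fixes u v :: "nat \<Rightarrow> real"
  assumes ZN: "Z < N"
    and exclusive: "\<And>k. k < N \<Longrightarrow> u k = 0 \<longleftrightarrow> v k \<noteq> 0"
    and u_sum: "\<And>m. m < Z \<Longrightarrow> (\<Sum>k=0..m. u k * u (k + (N - 1 - m))) = 0"
    and v_sum: "\<And>m. m < Z \<Longrightarrow> (\<Sum>k=0..m. v k * v (k + (N - 1 - m))) = 0"
    and u0: "u 0 \<noteq> 0"
  shows "m < Z \<Longrightarrow> v m = 0 \<and> u (N - 1 - m) = 0"
proof (induction m rule: less_induct)
  case (less m)
  have "u 0 * u (N - 1 - m) + (\<Sum>k=Suc 0..m. u k * u (k + (N - 1 - m))) = 0"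
    using u_sum [OF less.prems] by (simp add: sum.atLeast_Suc_atMost)
  moreover have "u (k + (N - 1 - m)) = 0" if "k \<in> {Suc 0..m}" for k
  proof -
    have "k + (N - 1 - m) = N - 1 - (m - k)"
      using that less.prems ZN by auto
    then show ?thesis using less.IH [of "m - k"] that less.prems by auto
  qed
  ultimately have u_end: "u (N - 1 - m) = 0"
    using u0 by simp
  have "v m = 0"
  proof (cases m)
    case 0
    then show ?thesis using exclusive [of 0] u0 ZN by auto
  next
    case (Suc m')
    have "(\<Sum>k=0..m'. v k * v (k + (N - 1 - m))) + v m * v (N - 1) = 0"
      using v_sum [OF less.prems] Suc less.prems ZN by (simp add: sum.atLeast0_atMost_Suc)
    moreover have "v k = 0" if "k \<in> {0..m'}" for k
      using less.IH [of k] that Suc less.prems by auto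
    moreover have "v (N - 1) \<noteq> 0"
      using less.IH [of 0] exclusive [of "N - 1"] Suc less.prems ZN by auto
    ultimately show ?thesis by simp
  qed
  with u_end show ?case by simp
qed

lemma binary_nth: "binary u \<Longrightarrow> k < length u \<Longrightarrow> u ! k = 1 \<or> u ! k = -1"
  unfolding binary_def by (simp add: nth_mem)

lemma binary_CZCP_entries:
  assumes "binary_CZCP c d N Z" and "k < N"
  shows "(c ! k = 1 \<or> c ! k = -1) \<and> (d ! k = 1 \<or> d ! k = -1)"
proof -
  have "binary c" "binary d" "length c = N" "length d = N"
    using assms(1) unfolding binary_CZCP_def CZCP_def by auto
  then show ?thesis
    using assms(2) binary_nth by metis
qed

lemma binary_CZCP_Z_less:
  assumes cz: "binary_CZCP c d N Z" and N: "N > 0"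
  shows "Z < N"
proof (rule ccontr)
  assume "\<not> Z < N"
  then have "\<bar>0::int\<bar> \<in> {int N - int Z..int N - 1}"
    using N by auto
  then have "aacorr c 0 + aacorr d 0 = 0"
    using cz unfolding binary_CZCP_def CZCP_def Let_def by blast
  moreover have "aacorr u 0 = N" if "u = c \<or> u = d" for u
  proof -
    have u: "length u = N" "binary u"
      using cz that unfolding binary_CZCP_def CZCP_def by auto
    have "aacorr u 0 = (\<Sum>k=0..N - 1. u ! k * u ! k)"
      using acorr_lag_from_end [OF u(1), of "N - 1" u] N by simp
    also have "\<dots> = (\<Sum>k=0..N - 1. 1)"
    proof (rule sum.cong [OF refl])
      fix k assume "k \<in> {0..N - 1}"
      then have "k < length u" using u(1) N by auto
      then have "u ! k = 1 \<or> u ! k = -1" by (rule binary_nth [OF u(2)])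
      then show "u ! k * u ! k = 1" by auto
    qed
    finally show ?thesis using N by simp
  qed
  ultimately show False
    using N by simp
qed

lemma binary_CZCP_corner_sums:
  assumes cz: "binary_CZCP c d N Z" and m: "m < Z" and ZN: "Z < N"
  shows "(\<Sum>k=0..m. (c ! k + d ! k) * (c ! (k + (N - 1 - m)) + d ! (k + (N - 1 - m)))) = 0"
    and "(\<Sum>k=0..m. (c ! k - d ! k) * (c ! (k + (N - 1 - m)) - d ! (k + (N - 1 - m)))) = 0"
proof -
  let ?\<tau> = "int (N - 1 - m)"
  have lengths: "length c = N" "length d = N"
    using cz unfolding binary_CZCP_def CZCP_def by auto
  have "\<bar>?\<tau>\<bar> \<in> {int N - int Z..int N - 1}"
    using m ZN by auto
  then have "aacorr c ?\<tau> + aacorr d ?\<tau> = 0" "acorr c d ?\<tau> + acorr d c ?\<tau> = 0"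
    using cz unfolding binary_CZCP_def CZCP_def Let_def by auto
  then have auto: "(\<Sum>k=0..m. c ! k * c ! (k + (N - 1 - m)) + d ! k * d ! (k + (N - 1 - m))) = 0"
    and cross: "(\<Sum>k=0..m. c ! k * d ! (k + (N - 1 - m)) + d ! k * c ! (k + (N - 1 - m))) = 0"
    using m ZN acorr_lag_from_end [OF lengths(1), of m c] acorr_lag_from_end [OF lengths(1), of m d]
      acorr_lag_from_end [OF lengths(2), of m c] acorr_lag_from_end [OF lengths(2), of m d]
    by (simp_all add: sum.distrib)
  show "(\<Sum>k=0..m. (c ! k + d ! k) * (c ! (k + (N - 1 - m)) + d ! (k + (N - 1 - m)))) = 0"
  proof -
    have "(\<Sum>k=0..m. (c ! k + d ! k) * (c ! (k + (N - 1 - m)) + d ! (k + (N - 1 - m))))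
        = (\<Sum>k=0..m. c ! k * c ! (k + (N - 1 - m)) + d ! k * d ! (k + (N - 1 - m)))
          + (\<Sum>k=0..m. c ! k * d ! (k + (N - 1 - m)) + d ! k * c ! (k + (N - 1 - m)))"
      unfolding sum.distrib [symmetric] by (intro sum.cong refl) (simp add: algebra_simps)
    then show ?thesis using auto cross by simp
  qed
  show "(\<Sum>k=0..m. (c ! k - d ! k) * (c ! (k + (N - 1 - m)) - d ! (k + (N - 1 - m)))) = 0"
  proof -
    have "(\<Sum>k=0..m. (c ! k - d ! k) * (c ! (k + (N - 1 - m)) - d ! (k + (N - 1 - m))))
        = (\<Sum>k=0..m. c ! k * c ! (k + (N - 1 - m)) + d ! k * d ! (k + (N - 1 - m)))
          - (\<Sum>k=0..m. c ! k * d ! (k + (N - 1 - m)) + d ! k * c ! (k + (N - 1 - m)))"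
      unfolding sum_subtractf [symmetric] by (intro sum.cong refl) (simp add: algebra_simps)
    then show ?thesis using auto cross by simp
  qed
qed

lemma binary_CZCP_corner_signs:
  assumes cz: "binary_CZCP c d N Z" and N: "N > 0"
  obtains l where "\<And>m. m < Z \<Longrightarrow> c ! m * d ! m = l"
    and "\<And>m. m < Z \<Longrightarrow> c ! (N - 1 - m) * d ! (N - 1 - m) = - l"
proof -
  have ZN: "Z < N" by (rule binary_CZCP_Z_less [OF cz N])
  note bin = binary_CZCP_entries [OF cz]
  define u where "u k = c ! k + d ! k" for k
  define v where "v k = c ! k - d ! k" for k
  have exclusive: "u k = 0 \<longleftrightarrow> v k \<noteq> 0" if "k < N" for k
    using bin [OF that] unfolding u_def v_def by auto
  have u_sum: "(\<Sum>k=0..m. u k * u (k + (N - 1 - m))) = 0"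
    and v_sum: "(\<Sum>k=0..m. v k * v (k + (N - 1 - m))) = 0" if "m < Z" for m
    unfolding u_def v_def using binary_CZCP_corner_sums [OF cz that ZN] by simp_all
  have prod_pos: "c ! k * d ! k = 1" if "k < N" "v k = 0" for k
    using bin [OF that(1)] that(2) unfolding v_def by auto
  have prod_neg: "c ! k * d ! k = -1" if "k < N" "u k = 0" for k
    using bin [OF that(1)] that(2) unfolding u_def by auto
  have end_index: "N - 1 - m < N" for m
    using N by simp
  show ?thesis
  proof (cases "u 0 = 0")
    case False
    have "v m = 0 \<and> u (N - 1 - m) = 0" if "m < Z" for m
      by (rule corner_vanishing [OF ZN exclusive u_sum v_sum False that])
    then show ?thesis
      using prod_pos prod_neg ZN end_index by (intro that [of 1]) auto
  next
    case True
    then have "v 0 \<noteq> 0" using exclusive [of 0] N by simp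
    moreover have "v k = 0 \<longleftrightarrow> u k \<noteq> 0" if "k < N" for k
      using exclusive [OF that] by auto
    ultimately have "u m = 0 \<and> v (N - 1 - m) = 0" if "m < Z" for m
      using corner_vanishing [of Z N v u] ZN u_sum v_sum that by blast
    then show ?thesis
      using prod_pos prod_neg ZN end_index by (intro that [of "-1"]) auto
  qed
qed

lemma binary_CZCP_corner_products:
  assumes cz: "binary_CZCP c d N Z"
    and i: "i \<in> {0..<int N}" and k: "k \<in> {0..<int N}"
    and corner: "(i < int Z \<and> k < int Z) \<or> (int N - int Z \<le> i \<and> int N - int Z \<le> k)"
  shows "padded c i * padded c k = padded d i * padded d k"
proof -
  have N: "N > 0" using i by auto
  obtain l where head: "\<And>m. m < Z \<Longrightarrow> c ! m * d ! m = l"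
    and tail: "\<And>m. m < Z \<Longrightarrow> c ! (N - 1 - m) * d ! (N - 1 - m) = - l"
    using binary_CZCP_corner_signs [OF cz N] by blast
  have tail': "c ! j * d ! j = - l" if "j < N" "int N - int Z \<le> int j" for j
  proof -
    have "N - 1 - (N - 1 - j) = j" "N - 1 - j < Z"
      using that by auto
    then show ?thesis using tail [of "N - 1 - j"] by simp
  qed
  have same_sign: "c ! nat i * d ! nat i = c ! nat k * d ! nat k"
    using corner head [of "nat i"] head [of "nat k"] tail' [of "nat i"] tail' [of "nat k"] i k
    by auto
  have ni: "nat i < N" and nk: "nat k < N"
    using i k by auto
  have "c ! nat i * c ! nat k = d ! nat i * d ! nat k"
    using same_sign binary_CZCP_entries [OF cz ni] binary_CZCP_entries [OF cz nk] by auto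
  moreover have "length c = N" "length d = N"
    using cz unfolding binary_CZCP_def CZCP_def by auto
  ultimately show ?thesis
    using i k unfolding padded_def by auto
qed

section \<open>Turyn's construction\<close>

locale turyn_pair =
  fixes a b c d :: "real list" and M N :: nat
  assumes length_a: "length a = M" and length_b: "length b = M"
    and length_c: "length c = N" and length_d: "length d = N"
begin

definition half_sum :: "int \<Rightarrow> real" where
  "half_sum = padded (vscale (1/2) (vadd a b))"

definition half_diff :: "int \<Rightarrow> real" where
  "half_diff = padded (vscale (1/2) (vsub b a))"

definition e_block :: "int \<Rightarrow> int \<Rightarrow> real" where
  "e_block i = (\<lambda>r. padded c i * half_sum r + - padded d (int N - 1 - i) * half_diff r)"

definition f_block :: "int \<Rightarrow> int \<Rightarrow> real" where
  "f_block i = (\<lambda>r. padded d i * half_sum r + padded c (int N - 1 - i) * half_diff r)"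

lemma length_turyn: "length (turyn_e a b c d) = N * M" "length (turyn_f a b c d) = N * M"
  unfolding turyn_e_def turyn_f_def using length_a length_b length_c length_d by auto

lemma padded_turyn_e: "padded (turyn_e a b c d) k = (\<Sum>i\<in>{0..<int N}. e_block i (k - i * int M))"
  unfolding turyn_e_def e_block_def half_sum_def half_diff_def
  using length_a length_b length_c length_d
  by (simp add: padded_vsub padded_kron padded_rev sum_subtractf [symmetric])

lemma padded_turyn_f: "padded (turyn_f a b c d) k = (\<Sum>i\<in>{0..<int N}. f_block i (k - i * int M))"
  unfolding turyn_f_def f_block_def half_sum_def half_diff_def
  using length_a length_b length_c length_d
  by (simp add: padded_vadd padded_kron padded_rev sum.distrib [symmetric])

lemma half_sum_half_diff_eq_0:
  assumes "r < 0 \<or> r \<ge> int M"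
  shows "half_sum r = 0" "half_diff r = 0"
  unfolding half_sum_def half_diff_def using assms length_a length_b by (auto intro: padded_eq_0)

lemma blocks_eq_0: "r < 0 \<or> r \<ge> int M \<Longrightarrow> e_block i r = 0 \<and> f_block i r = 0"
  unfolding e_block_def f_block_def by (simp add: half_sum_half_diff_eq_0)

lemma corr_half_sum_half_diff_far:
  assumes "\<bar>r\<bar> \<ge> int M" and "y = half_sum \<or> y = half_diff"
  shows "corr M x y r = 0"
  by (rule corr_eq_0_far) (use assms half_sum_half_diff_eq_0 in auto)

lemma autocorr_half_sum_half_diff:
  "corr M half_sum half_sum r + corr M half_diff half_diff r = (aacorr a r + aacorr b r) / 2"
  using length_a length_b unfolding half_sum_def half_diff_def corr_def
  by (simp add: acorr_eq_corr corr_def padded_vscale padded_vadd padded_vsub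
      sum.distrib [symmetric] sum_divide_distrib add_divide_distrib algebra_simps)

lemma padded_cd_eq_0: "\<not> (0 \<le> i \<and> i < int N) \<Longrightarrow> padded c i = 0 \<and> padded d i = 0"
  using length_c length_d by (simp add: padded_eq_0)

lemma acorr_turyn_blocks:
  "acorr (turyn_e a b c d) (turyn_e a b c d) \<tau>
     = (\<Sum>i\<in>{0..<int N}. \<Sum>j\<in>{0..<int N}. corr M (e_block i) (e_block j) (\<tau> + (i - j) * int M))"
  "acorr (turyn_f a b c d) (turyn_f a b c d) \<tau>
     = (\<Sum>i\<in>{0..<int N}. \<Sum>j\<in>{0..<int N}. corr M (f_block i) (f_block j) (\<tau> + (i - j) * int M))"
  "acorr (turyn_e a b c d) (turyn_f a b c d) \<tau>
     = (\<Sum>i\<in>{0..<int N}. \<Sum>j\<in>{0..<int N}. corr M (e_block i) (f_block j) (\<tau> + (i - j) * int M))"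
  "acorr (turyn_f a b c d) (turyn_e a b c d) \<tau>
     = (\<Sum>i\<in>{0..<int N}. \<Sum>j\<in>{0..<int N}. corr M (f_block i) (e_block j) (\<tau> + (i - j) * int M))"
  by (rule acorr_block_sum; simp add: length_turyn padded_turyn_e padded_turyn_f blocks_eq_0)+

lemma aacorr_turyn_sum:
  "aacorr (turyn_e a b c d) \<tau> + aacorr (turyn_f a b c d) \<tau>
   = (\<Sum>p\<in>{- int N<..<int N}. (corr N (padded c) (padded c) p + corr N (padded d) (padded d) p)
        * (corr M half_sum half_sum (\<tau> - p * int M) + corr M half_diff half_diff (\<tau> - p * int M)))"
proof -
  define Q where "Q r = corr M half_sum half_sum r + corr M half_diff half_diff r" for r
  let ?C = "padded c" and ?D = "padded d"
  have "aacorr (turyn_e a b c d) \<tau> + aacorr (turyn_f a b c d) \<tau>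
      = (\<Sum>i\<in>{0..<int N}. \<Sum>j\<in>{0..<int N}. corr M (e_block i) (e_block j) (\<tau> + (i - j) * int M)
                                         + corr M (f_block i) (f_block j) (\<tau> + (i - j) * int M))"
    by (simp add: acorr_turyn_blocks sum.distrib)
  also have "\<dots> = (\<Sum>i\<in>{0..<int N}. \<Sum>j\<in>{0..<int N}. ?C i * ?C j * Q (\<tau> + (i - j) * int M)
                                         + ?D i * ?D j * Q (\<tau> + (i - j) * int M))"
    by (rule double_sum_eq_by_flip, unfold e_block_def f_block_def Q_def corr_lincomb)
      (simp add: algebra_simps)
  also have "\<dots> = (\<Sum>p\<in>{- int N<..<int N}. corr N ?C ?C p * Q (\<tau> - p * int M))
                  + (\<Sum>p\<in>{- int N<..<int N}. corr N ?D ?D p * Q (\<tau> - p * int M))"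
    by (simp add: sum.distrib double_sum_by_lag padded_cd_eq_0)
  finally show ?thesis
    by (simp add: Q_def sum.distrib [symmetric] distrib_right)
qed

lemma acorr_turyn_cross_sum:
  "acorr (turyn_e a b c d) (turyn_f a b c d) \<tau> + acorr (turyn_f a b c d) (turyn_e a b c d) \<tau>
   = (\<Sum>p\<in>{- int N<..<int N}. (corr N (padded c) (padded d) p + corr N (padded d) (padded c) p)
        * (corr M half_sum half_sum (\<tau> - p * int M) - corr M half_diff half_diff (\<tau> - p * int M)))
   + (\<Sum>i\<in>{0..<int N}. \<Sum>j\<in>{0..<int N}.
        (padded c i * padded c (int N - 1 - j) - padded d i * padded d (int N - 1 - j))
          * corr M half_sum half_diff (\<tau> + (i - j) * int M)
      + (padded c (int N - 1 - i) * padded c j - padded d (int N - 1 - i) * padded d j)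
          * corr M half_diff half_sum (\<tau> + (i - j) * int M))"
proof -
  define Q where "Q r = corr M half_sum half_sum r - corr M half_diff half_diff r" for r
  let ?C = "padded c" and ?D = "padded d"
  let ?corner = "\<lambda>i j. (?C i * ?C (int N - 1 - j) - ?D i * ?D (int N - 1 - j))
          * corr M half_sum half_diff (\<tau> + (i - j) * int M)
      + (?C (int N - 1 - i) * ?C j - ?D (int N - 1 - i) * ?D j)
          * corr M half_diff half_sum (\<tau> + (i - j) * int M)"
  have "acorr (turyn_e a b c d) (turyn_f a b c d) \<tau> + acorr (turyn_f a b c d) (turyn_e a b c d) \<tau>
      = (\<Sum>i\<in>{0..<int N}. \<Sum>j\<in>{0..<int N}. corr M (e_block i) (f_block j) (\<tau> + (i - j) * int M)
                                         + corr M (f_block i) (e_block j) (\<tau> + (i - j) * int M))"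
    by (simp add: acorr_turyn_blocks sum.distrib)
  also have "\<dots> = (\<Sum>i\<in>{0..<int N}. \<Sum>j\<in>{0..<int N}. ?C i * ?D j * Q (\<tau> + (i - j) * int M)
                                         + ?D i * ?C j * Q (\<tau> + (i - j) * int M) + ?corner i j)"
    by (rule double_sum_eq_by_flip, unfold e_block_def f_block_def Q_def corr_lincomb)
      (simp add: algebra_simps)
  also have "\<dots> = (\<Sum>p\<in>{- int N<..<int N}. corr N ?C ?D p * Q (\<tau> - p * int M))
                  + (\<Sum>p\<in>{- int N<..<int N}. corr N ?D ?C p * Q (\<tau> - p * int M))
                  + (\<Sum>i\<in>{0..<int N}. \<Sum>j\<in>{0..<int N}. ?corner i j)"
    by (simp add: sum.distrib double_sum_by_lag padded_cd_eq_0)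
  finally show ?thesis
    by (simp add: Q_def sum.distrib [symmetric] distrib_right)
qed

end

lemma turyn_pair_of_binary:
  "binary_GCP a b M \<Longrightarrow> binary_CZCP c d N Z \<Longrightarrow> turyn_pair a b c d M N"
  by unfold_locales (auto simp: binary_GCP_def binary_CZCP_def CZCP_def)

lemma turyn_aacorr_complementary:
  assumes gcp: "binary_GCP a b M" and cz: "binary_CZCP c d N Z"
    and \<tau>: "\<bar>\<tau>\<bar> \<in> {1..int (Z * M)} \<union> {int (N * M) - int (Z * M)..int (N * M) - 1}"
  shows "aacorr (turyn_e a b c d) \<tau> + aacorr (turyn_f a b c d) \<tau> = 0"
proof -
  interpret turyn_pair a b c d M N
    using turyn_pair_of_binary [OF gcp cz] .
  have lag_term: "(corr N (padded c) (padded c) p + corr N (padded d) (padded d) p)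
      * (corr M half_sum half_sum (\<tau> - p * int M) + corr M half_diff half_diff (\<tau> - p * int M)) = 0"
    for p
  proof (cases "\<tau> = p * int M")
    case True
    then have "\<bar>p\<bar> \<in> {1..int Z} \<union> {int N - int Z..int N - 1}"
      using lag_of_multiple \<tau> by blast
    then have "aacorr c p + aacorr d p = 0"
      using cz unfolding binary_CZCP_def CZCP_def Let_def by blast
    then show ?thesis
      by (simp add: acorr_eq_corr length_c length_d)
  next
    case False
    then have "aacorr a (\<tau> - p * int M) + aacorr b (\<tau> - p * int M) = 0"
      using gcp unfolding binary_GCP_def GCP_def by simp
    then show ?thesis
      by (simp add: autocorr_half_sum_half_diff)
  qed
  then show ?thesis
    by (simp add: aacorr_turyn_sum lag_term)
qed

lemma turyn_cross_complementary:
  assumes gcp: "binary_GCP a b M" and cz: "binary_CZCP c d N Z"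
    and \<tau>: "\<bar>\<tau>\<bar> \<in> {int (N * M) - int (Z * M)..int (N * M) - 1}"
  shows "acorr (turyn_e a b c d) (turyn_f a b c d) \<tau> + acorr (turyn_f a b c d) (turyn_e a b c d) \<tau> = 0"
proof -
  interpret turyn_pair a b c d M N
    using turyn_pair_of_binary [OF gcp cz] .
  have M: "M > 0"
    using \<tau> by (cases M) auto
  have far: "(int N - int Z) * int M \<le> \<bar>\<tau>\<bar>"
    using \<tau> by (simp add: algebra_simps)
  have lag_term: "(corr N (padded c) (padded d) p + corr N (padded d) (padded c) p)
      * (corr M half_sum half_sum (\<tau> - p * int M) - corr M half_diff half_diff (\<tau> - p * int M)) = 0"
    if p: "p \<in> {- int N<..<int N}" for p
  proof (cases "\<bar>\<tau> - p * int M\<bar> < int M")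
    case True
    then have "int N - int Z \<le> \<bar>p\<bar>"
      using lag_near_multiple [OF M far] by (cases "0 \<le> \<tau>") fastforce+
    then have "acorr c d p + acorr d c p = 0"
      using cz p unfolding binary_CZCP_def CZCP_def Let_def by auto
    then show ?thesis
      by (simp add: acorr_eq_corr length_c length_d)
  next
    case False
    then show ?thesis
      by (simp add: corr_half_sum_half_diff_far)
  qed
  have corner_term:
    "(padded c i * padded c (int N - 1 - j) - padded d i * padded d (int N - 1 - j))
       * corr M half_sum half_diff (\<tau> + (i - j) * int M)
     + (padded c (int N - 1 - i) * padded c j - padded d (int N - 1 - i) * padded d j)
       * corr M half_diff half_sum (\<tau> + (i - j) * int M) = 0"
    if i: "i \<in> {0..<int N}" and j: "j \<in> {0..<int N}" for i j
  proof (cases "\<bar>\<tau> - (j - i) * int M\<bar> < int M")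
    case True
    then have "(0 \<le> \<tau> \<longrightarrow> int N - int Z \<le> j - i) \<and> (\<tau> < 0 \<longrightarrow> j - i \<le> - (int N - int Z))"
      using lag_near_multiple [OF M far] by blast
    then have "padded c i * padded c (int N - 1 - j) = padded d i * padded d (int N - 1 - j)"
      and "padded c (int N - 1 - i) * padded c j = padded d (int N - 1 - i) * padded d j"
      using i j by (auto intro!: binary_CZCP_corner_products [OF cz])
    then show ?thesis by simp
  next
    case False
    then show ?thesis
      by (simp add: corr_half_sum_half_diff_far algebra_simps)
  qed
  show ?thesis
    by (simp add: acorr_turyn_cross_sum lag_term corner_term)
qed

theorem theorem6:
  fixes a b c d :: "real list" and M N Z :: nat
  assumes "binary_GCP a b M"
    and "binary_CZCP c d N Z"
  shows "CZCP (turyn_e a b c d) (turyn_f a b c d) (N * M) (Z * M)"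
proof -
  interpret turyn_pair a b c d M N
    using turyn_pair_of_binary [OF assms] .
  show ?thesis
    unfolding CZCP_def Let_def
    using length_turyn turyn_aacorr_complementary [OF assms] turyn_cross_complementary [OF assms]
    by auto
qed

end
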